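(* Let $\mu\in(0,1)$ and $\beta(a)=\frac{\mu}{1+a}$. Let $W(\tau,b)=C(\tau)(1-b)^{\mu-1}(1+e^{\tau}b)^{-\mu}$ for $\tau\ge0$, $b\in[0,1)$, with $C(\tau)>0$ such that $\int_0^1W(\tau,b)db=1$, and $\delta(\tau)=\frac{C'(\tau)}{C(\tau)^2}-\frac{\mu}{C(\tau)}$. Then $$\delta(\tau)=-\frac{e^{-\tau}}{1+e^{-\tau}}.$$ *)

theory Defs
  imports "HOL-Analysis.Analysis"
begin

definition W :: "real \<Rightarrow> (real \<Rightarrow> real) \<Rightarrow> real \<Rightarrow> real \<Rightarrow> real" where
  "W \<mu> C \<tau> b = C \<tau> * (1 - b) powr (\<mu> - 1) * (1 + exp \<tau> * b) powr (-\<mu>)"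

end

theory Submission
  imports Defs
begin

text \<open>
  Write a = exp tau. The substitution u = a (1 - b) / (1 + a b) turns the normalising integral
  into  int_0^1 (1 - b) powr (mu - 1) (1 + a b) powr (-mu) db = a powr (-mu) G(a),  where
  G(x) = int_0^x u powr (mu - 1) / (1 + u) du. Hence R = 1 / C is R(tau) = exp (-mu tau) G(exp tau),
  which satisfies R' = 1 / (1 + exp tau) - mu R, and C' / C^2 - mu / C = - R' - mu R.
\<close>

definition beta_kernel :: "real \<Rightarrow> real \<Rightarrow> real" where
  "beta_kernel \<mu> u = u powr (\<mu> - 1) / (1 + u)"

definition beta_kernel_primitive :: "real \<Rightarrow> real \<Rightarrow> real" where
  "beta_kernel_primitive \<mu> x = integral {0..x} (beta_kernel \<mu>)"

lemma beta_kernel_integrable_on: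
  assumes "0 < \<mu>" "0 \<le> x"
  shows "beta_kernel \<mu> integrable_on {0..x}"
proof -
  have "(\<lambda>u. u powr (\<mu> - 1) - u powr \<mu> / (1 + u)) integrable_on {0..x}"
  proof (rule integrable_diff)
    show "(\<lambda>u. u powr (\<mu> - 1)) integrable_on {0..x}"
      using assms by (intro integrable_on_powr_from_0) auto
    have "continuous_on {0..x} (\<lambda>u. u powr \<mu> / (1 + u))"
      using assms by (intro continuous_intros continuous_on_powr') auto
    then show "(\<lambda>u. u powr \<mu> / (1 + u)) integrable_on {0..x}"
      by (rule integrable_continuous_interval)
  qed
  moreover have "u powr (\<mu> - 1) - u powr \<mu> / (1 + u) = beta_kernel \<mu> u" if "u \<in> {0..x}" for u
  proof (cases "u = 0")
    case False
    with that have "u > 0" by auto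
    then have "u powr \<mu> = u powr (\<mu> - 1) * u" by (simp add: powr_diff)
    with \<open>u > 0\<close> show ?thesis unfolding beta_kernel_def by (simp add: field_simps)
  qed (simp add: beta_kernel_def)
  ultimately show ?thesis by (rule integrable_eq)
qed

lemma continuous_on_beta_kernel_primitive:
  assumes "0 < \<mu>" "0 \<le> a"
  shows "continuous_on {0..a} (beta_kernel_primitive \<mu>)"
  unfolding beta_kernel_primitive_def[abs_def]
  by (rule indefinite_integral_continuous_1[OF beta_kernel_integrable_on[OF assms]])

lemma beta_kernel_primitive_has_real_derivative:
  assumes "0 < \<mu>" "0 < x"
  shows "(beta_kernel_primitive \<mu> has_real_derivative beta_kernel \<mu> x) (at x)"
proof -
  have "beta_kernel \<mu> integrable_on {0..x + 1}"
    using assms by (intro beta_kernel_integrable_on) auto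
  moreover have "continuous (at x within {0..x + 1}) (beta_kernel \<mu>)"
    unfolding beta_kernel_def using assms by (intro continuous_intros) auto
  ultimately have "(beta_kernel_primitive \<mu> has_vector_derivative beta_kernel \<mu> x)
      (at x within {0..x + 1})"
    unfolding beta_kernel_primitive_def[abs_def] using assms
    by (metis Diff_empty integral_has_vector_derivative_continuous_at finite.emptyI
        atLeastAtMost_iff less_add_one less_imp_le)
  then have "(beta_kernel_primitive \<mu> has_vector_derivative beta_kernel \<mu> x) (at x)"
    using assms by (simp add: at_within_Icc_at)
  then show ?thesis by (simp add: has_real_derivative_iff_has_vector_derivative)
qed

lemma beta_kernel_substitution:
  fixes a b \<mu> :: real
  assumes "0 < a" "0 \<le> b" "b < 1"
  shows "a powr (-\<mu>) * (beta_kernel \<mu> (a * (1 - b) / (1 + a * b)) * (a * (1 + a) / (1 + a * b)\<^sup>2))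
       = (1 - b) powr (\<mu> - 1) * (1 + a * b) powr (-\<mu>)"
proof -
  define p q c where "p = 1 - b" and "q = 1 + a * b" and "c = 1 + a"
  have "q > 0" using assms by (simp add: q_def add_pos_nonneg)
  have "p > 0" using assms by (simp add: p_def)
  have "c > 0" using assms by (simp add: c_def)
  have power: "(a * p / q) powr (\<mu> - 1) = a powr \<mu> * p powr (\<mu> - 1) * q / (a * q powr \<mu>)"
    using assms \<open>p > 0\<close> \<open>q > 0\<close> by (simp add: powr_divide powr_mult powr_diff)
  have denom: "1 + a * p / q = c / q"
    using \<open>q > 0\<close> by (simp add: p_def q_def c_def field_simps)
  have "a powr (-\<mu>) * ((a * p / q) powr (\<mu> - 1) / (1 + a * p / q) * (a * c / q\<^sup>2))
      = p powr (\<mu> - 1) * q powr (-\<mu>)"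
    unfolding power denom powr_minus using assms \<open>q > 0\<close> \<open>c > 0\<close>
    by (simp add: field_simps power2_eq_square)
  then show ?thesis by (simp add: beta_kernel_def p_def q_def c_def)
qed

lemma has_integral_beta_normaliser:
  fixes a \<mu> :: real
  assumes "0 < \<mu>" "0 < a"
  shows "((\<lambda>b. (1 - b) powr (\<mu> - 1) * (1 + a * b) powr (-\<mu>)) has_integral
           a powr (-\<mu>) * beta_kernel_primitive \<mu> a) {0..1}"
proof -
  define \<phi> where "\<phi> b = a * (1 - b) / (1 + a * b)" for b :: real
  define H where "H b = - (a powr (-\<mu>) * beta_kernel_primitive \<mu> (\<phi> b))" for b
  have denom_pos: "1 + a * b > 0" if "0 \<le> b" for b
    using assms that by (simp add: add_pos_nonneg)
  have \<phi>_range: "\<phi> b \<in> {0..a}" if "b \<in> {0..1}" for b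
  proof -
    have "a * (1 - b) \<le> a * (1 + a * b)"
      using assms that by (intro mult_left_mono) (auto intro: order_trans[of _ 0])
    then show ?thesis
      using assms that denom_pos[of b] by (simp add: \<phi>_def divide_le_eq)
  qed
  have \<phi>_pos: "\<phi> b > 0" if "0 \<le> b" "b < 1" for b
    using assms that denom_pos[of b] by (simp add: \<phi>_def)
  have \<phi>_deriv: "(\<phi> has_real_derivative - (a * (1 + a) / (1 + a * b)\<^sup>2)) (at b)" if "0 \<le> b" for b
    unfolding \<phi>_def[abs_def] using denom_pos[OF that]
    by (auto intro!: derivative_eq_intros simp: power2_eq_square divide_simps)
       (simp add: algebra_simps)
  have "continuous_on {0..1} \<phi>"
    unfolding \<phi>_def[abs_def] by (intro continuous_intros) (use denom_pos in fastforce)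
  then have "continuous_on {0..1} (beta_kernel_primitive \<mu> \<circ> \<phi>)"
    using \<phi>_range assms
    by (intro continuous_on_compose continuous_on_subset[OF continuous_on_beta_kernel_primitive,
        of \<mu> a]) auto
  then have "continuous_on {0..1} H"
    unfolding H_def[abs_def] by (intro continuous_intros) (simp add: o_def)
  moreover have "(H has_vector_derivative (1 - b) powr (\<mu> - 1) * (1 + a * b) powr (-\<mu>)) (at b)"
    if "b \<in> {0<..<1}" for b
  proof -
    have "(H has_real_derivative - (a powr (-\<mu>) *
        (beta_kernel \<mu> (\<phi> b) * - (a * (1 + a) / (1 + a * b)\<^sup>2)))) (at b)"
      unfolding H_def[abs_def] using that
      by (intro DERIV_minus DERIV_cmult DERIV_chain2[OF beta_kernel_primitive_has_real_derivative
          \<phi>_deriv] assms \<phi>_pos) auto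
    then show ?thesis
      using beta_kernel_substitution[OF assms(2), of b \<mu>] that
      by (simp add: has_real_derivative_iff_has_vector_derivative \<phi>_def)
  qed
  ultimately have "((\<lambda>b. (1 - b) powr (\<mu> - 1) * (1 + a * b) powr (-\<mu>)) has_integral
      H 1 - H 0) {0..1}"
    by (intro fundamental_theorem_of_calculus_interior) auto
  moreover have "H 1 - H 0 = a powr (-\<mu>) * beta_kernel_primitive \<mu> a"
    by (simp add: H_def \<phi>_def beta_kernel_primitive_def)
  ultimately show ?thesis by simp
qed

lemma inverse_normalising_constant:
  assumes "0 < \<mu>" "0 < C \<tau>" "((\<lambda>b. W \<mu> C \<tau> b) has_integral 1) {0..1}"
  shows "inverse (C \<tau>) = exp (- \<mu> * \<tau>) * beta_kernel_primitive \<mu> (exp \<tau>)"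
proof -
  have "((\<lambda>b. inverse (C \<tau>) * W \<mu> C \<tau> b) has_integral inverse (C \<tau>) * 1) {0..1}"
    using assms(3) by (rule has_integral_mult_right)
  then have "((\<lambda>b. (1 - b) powr (\<mu> - 1) * (1 + exp \<tau> * b) powr (-\<mu>)) has_integral
      inverse (C \<tau>)) {0..1}"
    using assms(2) by (simp add: W_def field_simps)
  then have "inverse (C \<tau>) = exp \<tau> powr (-\<mu>) * beta_kernel_primitive \<mu> (exp \<tau>)"
    using has_integral_beta_normaliser[OF assms(1) exp_gt_zero] by (rule has_integral_unique)
  then show ?thesis by (simp add: powr_def)
qed

lemma exp_scaled_beta_kernel_primitive_has_real_derivative:
  assumes "0 < \<mu>"
  shows "((\<lambda>s. exp (- \<mu> * s) * beta_kernel_primitive \<mu> (exp s)) has_real_derivative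
           1 / (1 + exp \<tau>) - \<mu> * (exp (- \<mu> * \<tau>) * beta_kernel_primitive \<mu> (exp \<tau>))) (at \<tau>)"
proof -
  have "exp (- \<mu> * \<tau>) * (beta_kernel \<mu> (exp \<tau>) * exp \<tau>) = 1 / (1 + exp \<tau>)"
    by (simp add: beta_kernel_def powr_def mult_exp_exp algebra_simps)
  moreover have "((\<lambda>s. beta_kernel_primitive \<mu> (exp s)) has_real_derivative
      beta_kernel \<mu> (exp \<tau>) * exp \<tau>) (at \<tau>)"
    by (rule DERIV_chain2[OF beta_kernel_primitive_has_real_derivative[OF assms exp_gt_zero]
        DERIV_exp])
  then have "((\<lambda>s. exp (- \<mu> * s) * beta_kernel_primitive \<mu> (exp s)) has_real_derivative
      exp (- \<mu> * \<tau>) * (- \<mu>) * beta_kernel_primitive \<mu> (exp \<tau>)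
      + exp (- \<mu> * \<tau>) * (beta_kernel \<mu> (exp \<tau>) * exp \<tau>)) (at \<tau>)"
    by (auto intro!: derivative_eq_intros)
  ultimately show ?thesis by (simp add: algebra_simps)
qed

lemma has_real_derivative_reciprocal_within:
  assumes "(R has_real_derivative R') (at x)" "R x \<noteq> 0" "x \<in> S"
    and "\<And>s. s \<in> S \<Longrightarrow> C s = inverse (R s)"
  shows "(C has_real_derivative - R' * (C x)\<^sup>2) (at x within S)"
proof -
  have "((\<lambda>s. inverse (R s)) has_real_derivative - (R' * inverse (R x ^ Suc (Suc 0))))
      (at x within S)"
    by (rule DERIV_inverse_fun[OF has_field_derivative_at_within[OF assms(1)] assms(2)])
  then have "((\<lambda>s. inverse (R s)) has_real_derivative - R' * (C x)\<^sup>2) (at x within S)"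
    using assms(3,4) by (simp add: power2_eq_square power_inverse)
  then show ?thesis
    by (rule has_field_derivative_transform_within[OF _ zero_less_one]) (use assms(3,4) in auto)
qed

theorem lemma5:
  fixes \<mu> :: real and C :: "real \<Rightarrow> real"
  assumes "0 < \<mu>" and "\<mu> < 1"
    and "\<And>\<tau>. \<tau> \<ge> 0 \<Longrightarrow> C \<tau> > 0"
    and "\<And>\<tau>. \<tau> \<ge> 0 \<Longrightarrow> ((\<lambda>b. W \<mu> C \<tau> b) has_integral 1) {0..1}"
  shows "\<forall>\<tau>\<ge>0. \<exists>D. (C has_real_derivative D) (at \<tau> within {0..}) \<and>
           D / (C \<tau>)\<^sup>2 - \<mu> / C \<tau> = - exp (-\<tau>) / (1 + exp (-\<tau>))"
proof (intro allI impI)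
  fix \<tau> :: real
  assume "\<tau> \<ge> 0"
  define R where "R s = exp (- \<mu> * s) * beta_kernel_primitive \<mu> (exp s)" for s
  define R' where "R' = 1 / (1 + exp \<tau>) - \<mu> * R \<tau>"
  have C_eq: "C s = inverse (R s)" if "s \<ge> 0" for s
    using inverse_normalising_constant[OF assms(1) assms(3,4)[OF that]] unfolding R_def
    by (metis inverse_inverse_eq)
  have "C \<tau> \<noteq> 0" "R \<tau> \<noteq> 0"
    using C_eq[OF \<open>\<tau> \<ge> 0\<close>] assms(3)[OF \<open>\<tau> \<ge> 0\<close>] by auto
  have "(R has_real_derivative R') (at \<tau>)"
    unfolding R_def[abs_def] R'_def
    by (rule exp_scaled_beta_kernel_primitive_has_real_derivative[OF assms(1)])
  then have "(C has_real_derivative - R' * (C \<tau>)\<^sup>2) (at \<tau> within {0..})"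
    by (rule has_real_derivative_reciprocal_within) (use \<open>R \<tau> \<noteq> 0\<close> \<open>\<tau> \<ge> 0\<close> C_eq in auto)
  moreover have "- R' * (C \<tau>)\<^sup>2 / (C \<tau>)\<^sup>2 - \<mu> / C \<tau> = - R' - \<mu> * R \<tau>"
    using \<open>C \<tau> \<noteq> 0\<close> C_eq[OF \<open>\<tau> \<ge> 0\<close>] by (simp add: divide_inverse)
  moreover have "- R' - \<mu> * R \<tau> = - exp (-\<tau>) / (1 + exp (-\<tau>))"
    by (simp add: R'_def exp_minus field_simps add_pos_pos)
  ultimately show "\<exists>D. (C has_real_derivative D) (at \<tau> within {0..}) \<and>
      D / (C \<tau>)\<^sup>2 - \<mu> / C \<tau> = - exp (-\<tau>) / (1 + exp (-\<tau>))"
    by metis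
qed

end
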